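(* Fix a treatment group $d$, a post-treatment target age $a$, and a control group $d'$ with $d'>a\ge d$. Suppose the No Anticipation assumption holds for both genders $g\in\{f,m\}$ and both groups $d$ and $d'$, and suppose $$\frac{\gamma_{\mathrm{PT}}(f,d,d',a)}{APO(f,d,\infty,a)}=\frac{\gamma_{\mathrm{PT}}(m,d,d',a)}{APO(m,d,\infty,a)}.$$ Let $$P(d,a)=\frac{ATE(f,d,a)-ATE(m,d,a)}{APO(f,d,\infty,a)},\qquad \delta_P(d,d',a)=\frac{\delta_{\mathrm{ATE}}(f,d,d',a)-\delta_{\mathrm{ATE}}(m,d,d',a)}{\delta_{\mathrm{APO}}(f,d,d',a)}.$$ Then $$\delta_P(d,d',a)=P(d,a)\cdot\mathrm{Bias}_1(d,d',a)+\mathrm{Bias}_2(d,d',a),$$ where $$\mathrm{Bias}_1(d,d',a)=\frac{APO(f,d,\infty,a)}{APO(f,d,\infty,a)-\gamma_{\mathrm{PT}}(f,d,d',a)},\qquad \mathrm{Bias}_2(d,d',a)=\frac{\gamma_{\mathrm{PT}}(f,d,d',a)-\gamma_{\mathrm{PT}}(m,d,d',a)}{APO(f,d,\infty,a)-\gamma_{\mathrm{PT}}(f,d,d',a)}.$$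
   Context: Population of individuals with gender $G\in\{f,m\}$ and age at first childbirth $D$ (with $D=\infty$ meaning never). For each age $a$ and each (possibly counterfactual) first-birth age $d'\in\mathbb{N}\cup\{\infty\}$ there is a potential outcome (earnings) $Y_a(d')$; observed earnings satisfy consistency $Y_a=Y_a(D)$. Define $APO(g,d,d',a)=\mathbb{E}[Y_a(d')\mid G=g,D=d]$ and $ATE(g,d,a)=APO(g,d,d,a)-APO(g,d,\infty,a)$. Descriptive quantities: $\delta_{\mathrm{APO}}(g,d,d',a)=\mathbb{E}[Y_{d-1}\mid G=g,D=d]+\mathbb{E}[Y_a-Y_{d-1}\mid G=g,D=d']$, $\delta_{\mathrm{ATE}}(g,d,d',a)=\mathbb{E}[Y_a\mid G=g,D=d]-\delta_{\mathrm{APO}}(g,d,d',a)$. Parallel-trends violation: $\gamma_{\mathrm{PT}}(g,d,d',a)=APO(g,d,\infty,a)-APO(g,d,\infty,d-1)-[APO(g,d',\infty,a)-APO(g,d',\infty,d-1)]$. No Anticipation for gender $g$ and group $d$: $APO(g,d,d,b)=APO(g,d,\infty,b)$ for every age $b<d$. All denominators appearing are assumed nonzero. *)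

theory Defs
  imports "HOL-Probability.Probability" "HOL-Library.Extended_Nat"
begin

datatype gender = Fem | Mal

text \<open>Population: probability space M; G gender, D age at first birth (\<infinity> = never),
  Y a d' \<omega> the potential earnings at age a under first-birth age d'.\<close>

definition cexp :: "'w measure \<Rightarrow> ('w \<Rightarrow> real) \<Rightarrow> 'w set \<Rightarrow> real" where
  "cexp M X A = (LINT \<omega>:A|M. X \<omega>) / measure M A"

definition grp :: "'w measure \<Rightarrow> ('w \<Rightarrow> gender) \<Rightarrow> ('w \<Rightarrow> enat) \<Rightarrow> gender \<Rightarrow> enat \<Rightarrow> 'w set" where
  "grp M G D g d = {\<omega> \<in> space M. G \<omega> = g \<and> D \<omega> = d}"

definition Yobs :: "(nat \<Rightarrow> enat \<Rightarrow> 'w \<Rightarrow> real) \<Rightarrow> ('w \<Rightarrow> enat) \<Rightarrow> nat \<Rightarrow> 'w \<Rightarrow> real" where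
  "Yobs Y D a = (\<lambda>\<omega>. Y a (D \<omega>) \<omega>)"

definition APO where
  "APO M G D Y g d d' a = cexp M (Y a d') (grp M G D g d)"

definition ATE where
  "ATE M G D Y g d a = APO M G D Y g d d a - APO M G D Y g d \<infinity> a"

definition delta_APO where
  "delta_APO M G D Y g (d::nat) d' a =
     cexp M (Yobs Y D (d - 1)) (grp M G D g (enat d))
     + cexp M (\<lambda>\<omega>. Yobs Y D a \<omega> - Yobs Y D (d - 1) \<omega>) (grp M G D g d')"

definition delta_ATE where
  "delta_ATE M G D Y g (d::nat) d' a =
     cexp M (Yobs Y D a) (grp M G D g (enat d)) - delta_APO M G D Y g d d' a"

definition gamma_PT where
  "gamma_PT M G D Y g (d::nat) d' a =
     APO M G D Y g (enat d) \<infinity> a - APO M G D Y g (enat d) \<infinity> (d - 1)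
     - (APO M G D Y g d' \<infinity> a - APO M G D Y g d' \<infinity> (d - 1))"

definition no_anticipation where
  "no_anticipation M G D Y g (d::nat) \<longleftrightarrow>
     (\<forall>b<d. APO M G D Y g (enat d) (enat d) b = APO M G D Y g (enat d) \<infinity> b)"

end

theory Submission
  imports Defs
begin

(* Under No Anticipation the descriptive quantities miss their causal targets by exactly the
   parallel-trends violation: delta_APO = APO(g,d,\<infinity>,a) - gamma_PT and delta_ATE = ATE + gamma_PT.
   Substituting these into delta_P, the decomposition is an identity of real fractions. *)

lemma cexp_cong:
  assumes "A \<in> sets M" "\<And>\<omega>. \<omega> \<in> A \<Longrightarrow> X \<omega> = Z \<omega>"
  shows "cexp M X A = cexp M Z A"
proof -
  have "(LINT \<omega>:A|M. X \<omega>) = (LINT \<omega>:A|M. Z \<omega>)"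
    by (rule set_lebesgue_integral_cong) (use assms in auto)
  then show ?thesis
    unfolding cexp_def by simp
qed

lemma cexp_diff:
  fixes X Z :: "'w \<Rightarrow> real"
  assumes "A \<in> sets M" "integrable M X" "integrable M Z"
  shows "cexp M (\<lambda>\<omega>. X \<omega> - Z \<omega>) A = cexp M X A - cexp M Z A"
proof -
  have "set_integrable M A X" "set_integrable M A Z"
    using assms by (auto simp: set_integrable_def mult.commute[of "indicator _ _"]
        intro!: integrable_real_mult_indicator)
  then show ?thesis
    unfolding cexp_def by (simp add: set_integral_diff(2) diff_divide_distrib)
qed

lemma cexp_Yobs_grp:
  assumes "grp M G D g e \<in> sets M"
  shows "cexp M (Yobs Y D b) (grp M G D g e) = APO M G D Y g e e b"
  unfolding APO_def by (rule cexp_cong[OF assms]) (simp add: grp_def Yobs_def)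

lemma cexp_Yobs_diff_grp:
  assumes "grp M G D g e \<in> sets M" "integrable M (Y b e)" "integrable M (Y c e)"
  shows "cexp M (\<lambda>\<omega>. Yobs Y D b \<omega> - Yobs Y D c \<omega>) (grp M G D g e)
       = APO M G D Y g e e b - APO M G D Y g e e c"
proof -
  have "cexp M (\<lambda>\<omega>. Yobs Y D b \<omega> - Yobs Y D c \<omega>) (grp M G D g e)
      = cexp M (\<lambda>\<omega>. Y b e \<omega> - Y c e \<omega>) (grp M G D g e)"
    by (rule cexp_cong[OF assms(1)]) (simp add: grp_def Yobs_def)
  then show ?thesis
    unfolding APO_def using cexp_diff[OF assms] by simp
qed

lemma no_anticipationD:
  assumes "no_anticipation M G D Y g d" "b < d"
  shows "APO M G D Y g (enat d) (enat d) b = APO M G D Y g (enat d) \<infinity> b"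
  using assms unfolding no_anticipation_def by blast

lemma delta_APO_eq_APO_minus_gamma_PT:
  assumes "\<And>e. grp M G D g e \<in> sets M" "\<And>b e. integrable M (Y b e)"
    and "no_anticipation M G D Y g d" "no_anticipation M G D Y g d'"
    and "0 < d" "d \<le> d'" "a < d'"
  shows "delta_APO M G D Y g d (enat d') a
       = APO M G D Y g (enat d) \<infinity> a - gamma_PT M G D Y g d (enat d') a"
proof -
  have pre_d: "APO M G D Y g (enat d) (enat d) (d - 1) = APO M G D Y g (enat d) \<infinity> (d - 1)"
    using assms(3,5) by (simp add: no_anticipationD)
  have pre_d': "APO M G D Y g (enat d') (enat d') b = APO M G D Y g (enat d') \<infinity> b"
    if "b \<in> {d - 1, a}" for b
    using assms(4,6,7) that by (auto intro: no_anticipationD)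
  show ?thesis
    using assms(1,2) pre_d pre_d'
    by (simp add: delta_APO_def gamma_PT_def cexp_Yobs_grp cexp_Yobs_diff_grp)
qed

lemma delta_ATE_eq_ATE_plus_gamma_PT:
  assumes "\<And>e. grp M G D g e \<in> sets M" "\<And>b e. integrable M (Y b e)"
    and "no_anticipation M G D Y g d" "no_anticipation M G D Y g d'"
    and "0 < d" "d \<le> d'" "a < d'"
  shows "delta_ATE M G D Y g d (enat d') a
       = ATE M G D Y g (enat d) a + gamma_PT M G D Y g d (enat d') a"
  using assms
  by (simp add: delta_ATE_def ATE_def cexp_Yobs_grp delta_APO_eq_APO_minus_gamma_PT)

lemma shifted_diff_divide_decomposition:
  fixes A t1 t2 c1 c2 :: "'a :: field"
  assumes "A \<noteq> 0"
  shows "((t1 + c1) - (t2 + c2)) / (A - c1) = (t1 - t2) / A * (A / (A - c1)) + (c1 - c2) / (A - c1)"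
proof -
  have "(t1 - t2) / A * (A / (A - c1)) = (t1 - t2) / (A - c1)"
    using assms by simp
  then show ?thesis
    by (simp add: diff_divide_distrib add_divide_distrib)
qed

theorem lemma2:
  fixes M :: "'w measure" and G :: "'w \<Rightarrow> gender" and D :: "'w \<Rightarrow> enat"
    and Y :: "nat \<Rightarrow> enat \<Rightarrow> 'w \<Rightarrow> real" and d d' a :: nat
  assumes ps: "prob_space M"
    and ev: "\<And>g e. grp M G D g e \<in> sets M"
    and int: "\<And>b e. integrable M (Y b e)"
    and pos: "\<And>g. measure M (grp M G D g (enat d)) \<noteq> 0"
             "\<And>g. measure M (grp M G D g (enat d')) \<noteq> 0"
    and d_pos: "0 < d"
    and ord: "d \<le> a" "a < d'"
    and NA: "\<And>g. no_anticipation M G D Y g d" "\<And>g. no_anticipation M G D Y g d'"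
    and nz1: "APO M G D Y Fem (enat d) \<infinity> a \<noteq> 0"
    and nz2: "APO M G D Y Mal (enat d) \<infinity> a \<noteq> 0"
    and nz3: "delta_APO M G D Y Fem d (enat d') a \<noteq> 0"
    and nz4: "APO M G D Y Fem (enat d) \<infinity> a - gamma_PT M G D Y Fem d (enat d') a \<noteq> 0"
    and ratio: "gamma_PT M G D Y Fem d (enat d') a / APO M G D Y Fem (enat d) \<infinity> a
              = gamma_PT M G D Y Mal d (enat d') a / APO M G D Y Mal (enat d) \<infinity> a"
  shows "(let P = (ATE M G D Y Fem (enat d) a - ATE M G D Y Mal (enat d) a)
                  / APO M G D Y Fem (enat d) \<infinity> a;
              dP = (delta_ATE M G D Y Fem d (enat d') a - delta_ATE M G D Y Mal d (enat d') a)
                  / delta_APO M G D Y Fem d (enat d') a;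
              Bias1 = APO M G D Y Fem (enat d) \<infinity> a
                  / (APO M G D Y Fem (enat d) \<infinity> a - gamma_PT M G D Y Fem d (enat d') a);
              Bias2 = (gamma_PT M G D Y Fem d (enat d') a - gamma_PT M G D Y Mal d (enat d') a)
                  / (APO M G D Y Fem (enat d) \<infinity> a - gamma_PT M G D Y Fem d (enat d') a)
          in dP = P * Bias1 + Bias2)"
proof -
  have "d \<le> d'"
    using ord by simp
  note shift = delta_APO_eq_APO_minus_gamma_PT[OF ev int NA(1) NA(2) d_pos this ord(2)]
    delta_ATE_eq_ATE_plus_gamma_PT[OF ev int NA(1) NA(2) d_pos this ord(2)]
  show ?thesis
    unfolding Let_def shift using shifted_diff_divide_decomposition[OF nz1] by simp
qed

end
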